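(* Let $K \ge 2$ be an integer and let $\tilde{\mathbf A} \in \mathbb{R}^{2K^2 \times K^2}$ be the real lifted shear operator defined in the context. Let $\tilde{\mathbf B} \in \mathbb{R}^{K^2 \times 2K^2}$, $\tilde{\boldsymbol\gamma} \in \mathbb{R}^{2K^2}$, $\tau > 0$, and let $D : \mathbb{R}^{K^2} \to \mathbb{R}^{K^2}$ be a map (the denoiser). Set $\mathbb V := (\ker \tilde{\mathbf B}\tilde{\mathbf A})^\perp \subset \mathbb{R}^{K^2}$. Define the forward operator $F_{\tilde{\boldsymbol\gamma}}(\boldsymbol\kappa',\tau) := \boldsymbol\kappa' + \tau \tilde{\mathbf B}(\tilde{\boldsymbol\gamma} - \tilde{\mathbf A}\boldsymbol\kappa')$ for $\boldsymbol\kappa' \in \mathbb{R}^{K^2}$, and the operator $T_{\tilde{\boldsymbol\gamma}}(\cdot,\tau) := D \circ F_{\tilde{\boldsymbol\gamma}}(\cdot,\tau)$. Assume: (i) $D$ maps $\mathbb V$ into $\mathbb V$; (ii) $D$ is non-expansive on $\mathbb V$, i.e. $\|D(\mathbf x) - D(\mathbf y)\| \le \beta \|\mathbf x - \mathbf y\|$ for all $\mathbf x, \mathbf y \in \mathbb V$ for some $\beta \le 1$; (iii) $\tilde{\mathbf B}\tilde{\mathbf A}$ is symmetric positive semidefinite (and nonzero); (iv) $\operatorname{im} \tilde{\mathbf B} \subset \mathbb V$; (v) letting $\lambda_{\min}$ and $\lambda_{\max} = \|\tilde{\mathbf B}\tilde{\mathbf A}\|$ denote respectively the smallest and largest nonzero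 eigenvalues of $\tilde{\mathbf B}\tilde{\mathbf A}$, and $\rho^\star := \frac{\lambda_{\max} - \lambda_{\min}}{\lambda_{\max} + \lambda_{\min}}$, we have for some fixed $\rho \in [\rho^\star, 1)$ that $$\frac{1-\rho}{\lambda_{\min}} \le \tau \le \frac{1+\rho}{\lambda_{\max}}.$$ Then $T_{\tilde{\boldsymbol\gamma}}(\cdot,\tau)$ admits a unique fixed point $\hat{\boldsymbol\kappa} \in \mathbb V$. Moreover, for any $\boldsymbol\kappa^{(0)} \in \mathbb V$, the sequence defined by $\boldsymbol\kappa^{(k+1)} = T_{\tilde{\boldsymbol\gamma}}(\boldsymbol\kappa^{(k)},\tau)$ converges linearly to $\hat{\boldsymbol\kappa}$ with rate $\rho$, i.e. $\|\boldsymbol\kappa^{(k)} - \hat{\boldsymbol\kappa}\| \le \rho^k \|\boldsymbol\kappa^{(0)} - \hat{\boldsymbol\kappa}\|$ for all $k \in \mathbb N$.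
   Context: Vectors in $\mathbb{R}^{K^2}$ or $\mathbb{C}^{K^2}$ represent $K\times K$ images flattened, with pixel $(k_1,k_2)$, $0\le k_1,k_2\le K-1$, at index $Kk_1+k_2$. Let $\mathbf F \in \mathbb{C}^{K^2\times K^2}$ be the (unitary) 2D discrete Fourier transform and $\mathbf F^{H}$ its conjugate transpose. Let $\mathbf P$ be the diagonal matrix with $\mathbf P[0,0]=0$ and $\mathbf P[Kk_1+k_2, Kk_1+k_2] = \frac{(k_1 + i k_2)^2}{k_1^2+k_2^2}$ for $(k_1,k_2) \ne (0,0)$. Set $\mathbf A := \mathbf F^H \mathbf P \mathbf F \in \mathbb{C}^{K^2\times K^2}$ and $\tilde{\mathbf A} := \begin{pmatrix} \operatorname{Re}\mathbf A \\ \operatorname{Im}\mathbf A\end{pmatrix} \in \mathbb{R}^{2K^2\times K^2}$. Norms are Euclidean norms (operator norm for matrices). *)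

theory Defs
  imports "Jordan_Normal_Form.Schur_Decomposition" "Jordan_Normal_Form.Matrix_Kernel"
begin

text \<open>Vectors of R^(K^2) are JNF vectors of dimension K*K; pixel (k1,k2) sits at index K*k1+k2.\<close>

definition dft2 :: "nat \<Rightarrow> complex mat" where
  "dft2 K = mat (K*K) (K*K) (\<lambda>(i,j).
     complex_of_real (1 / real K) *
     cis (- 2 * pi * real ((i div K) * (j div K) + (i mod K) * (j mod K)) / real K))"

definition shear_mult :: "nat \<Rightarrow> complex mat" where
  "shear_mult K = mat (K*K) (K*K) (\<lambda>(i,j).
     if i = j \<and> i \<noteq> 0 then
       (let k1 = real (i div K); k2 = real (i mod K) in
        (Complex k1 k2)^2 / complex_of_real (k1^2 + k2^2))
     else 0)"

definition shear_op :: "nat \<Rightarrow> complex mat" where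
  "shear_op K = mat_adjoint (dft2 K) * shear_mult K * dft2 K"

definition lifted_shear_op :: "nat \<Rightarrow> real mat" where
  "lifted_shear_op K = mat (2*(K*K)) (K*K) (\<lambda>(i,j).
     if i < K*K then Re (shear_op K $$ (i,j)) else Im (shear_op K $$ (i - K*K, j)))"

definition enorm :: "real vec \<Rightarrow> real" where
  "enorm x = sqrt (x \<bullet> x)"

definition orth_compl :: "nat \<Rightarrow> real vec set \<Rightarrow> real vec set" where
  "orth_compl n W = {x \<in> carrier_vec n. \<forall>y\<in>W. x \<bullet> y = 0}"

end

(*
  Let C = I - tau BA. The forward step F is affine with linear part C, so T = D o F is a
  rho-contraction of V = (ker BA)^perp once |C z| <= rho |z| on V, and Banach's fixed point
  theorem on the complete space V gives the unique fixed point and the geometric rate.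

  C is symmetric and leaves V invariant. A maximiser x of |C z| on the (compact) unit sphere of V
  satisfies C^2 x = sigma^2 x with sigma = |C x| by the first-order condition, so C has an
  eigenvector in V for sigma or -sigma, and |C z| <= sigma |z| on V. That eigenvector is one of BA
  for the nonzero eigenvalue lambda = (1 -/+ sigma) / tau, so lambda_min <= lambda <= lambda_max,
  and the bounds on tau give sigma = |1 - tau lambda| <= rho.
*)
theory Submission
  imports Defs "Jordan_Normal_Form.Spectral_Radius" "HOL-Analysis.Urysohn"
begin

hide_type (open) Finite_Cartesian_Product.vec
hide_const (open) Finite_Cartesian_Product.vec
unbundle no vec_syntax
no_notation inner (infix \<open>\<bullet>\<close> 70)

lemma dot_self_nonneg: "0 \<le> (x :: real vec) \<bullet> x"
  unfolding scalar_prod_def by (simp add: sum_nonneg)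

lemma enorm_eq_L2_set: "x \<in> carrier_vec n \<Longrightarrow> enorm x = L2_set (\<lambda>i. x $ i) {..<n}"
  unfolding enorm_def L2_set_def scalar_prod_def by (simp add: power2_eq_square atLeast0LessThan)

lemma enorm_nonneg: "0 \<le> enorm x"
  unfolding enorm_def by (simp add: dot_self_nonneg)

lemma enorm_square: "(enorm x)\<^sup>2 = x \<bullet> x"
  unfolding enorm_def by (simp add: dot_self_nonneg)

lemma enorm_eq_0_iff: "x \<in> carrier_vec n \<Longrightarrow> enorm x = 0 \<longleftrightarrow> x = 0\<^sub>v n"
  by (auto simp: enorm_eq_L2_set L2_set_eq_0_iff)

lemma dot_self_eq_0_iff: "x \<in> carrier_vec n \<Longrightarrow> x \<bullet> x = 0 \<longleftrightarrow> x = (0\<^sub>v n :: real vec)"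
  by (metis enorm_eq_0_iff enorm_def real_sqrt_eq_zero_cancel_iff)

lemma abs_index_le_enorm: "x \<in> carrier_vec n \<Longrightarrow> i < n \<Longrightarrow> \<bar>x $ i\<bar> \<le> enorm x"
  using member_le_L2_set[of "{..<n}" i "\<lambda>i. \<bar>x $ i\<bar>"] by (simp add: enorm_eq_L2_set L2_set_def)

text \<open>The metric is taken coordinatewise on \<open>{..<n}\<close>: \<^term>\<open>enorm (x - y)\<close> is not symmetric
  for vectors of different dimensions, as the locale \<^locale>\<open>Metric_space\<close> would require.\<close>

definition dist_vec :: "nat \<Rightarrow> real vec \<Rightarrow> real vec \<Rightarrow> real" where
  "dist_vec n x y = L2_set (\<lambda>i. x $ i - y $ i) {..<n}"

lemma dist_vec_eq_enorm: "x \<in> carrier_vec n \<Longrightarrow> y \<in> carrier_vec n \<Longrightarrow> dist_vec n x y = enorm (x - y)"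
  by (auto simp: dist_vec_def enorm_eq_L2_set[of _ n] intro: L2_set_cong)

lemma Metric_space_dist_vec: "Metric_space (carrier_vec n) (dist_vec n)"
proof unfold_locales
  fix x y z :: "real vec"
  show "dist_vec n x z \<le> dist_vec n x y + dist_vec n y z"
    using L2_set_triangle_ineq[of "\<lambda>i. x $ i - y $ i" "\<lambda>i. y $ i - z $ i" "{..<n}"]
    by (simp add: dist_vec_def)
  show "dist_vec n x y = dist_vec n y x"
    by (simp add: dist_vec_def L2_set_def power2_commute)
qed (auto simp: dist_vec_def L2_set_eq_0_iff intro: eq_vecI)

lemma orth_compl_carrier: "x \<in> orth_compl n Y \<Longrightarrow> x \<in> carrier_vec n"
  unfolding orth_compl_def by auto

lemma zero_in_orth_compl: "Y \<subseteq> carrier_vec n \<Longrightarrow> 0\<^sub>v n \<in> orth_compl n Y"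
  unfolding orth_compl_def by auto

lemma orth_compl_add:
  "Y \<subseteq> carrier_vec n \<Longrightarrow> x \<in> orth_compl n Y \<Longrightarrow> z \<in> orth_compl n Y \<Longrightarrow> x + z \<in> orth_compl n Y"
  unfolding orth_compl_def by (auto simp: add_scalar_prod_distrib subset_iff)

lemma orth_compl_diff:
  "Y \<subseteq> carrier_vec n \<Longrightarrow> x \<in> orth_compl n Y \<Longrightarrow> z \<in> orth_compl n Y \<Longrightarrow> x - z \<in> orth_compl n Y"
  unfolding orth_compl_def by (auto simp: minus_scalar_prod_distrib subset_iff)

lemma orth_compl_smult:
  "Y \<subseteq> carrier_vec n \<Longrightarrow> x \<in> orth_compl n Y \<Longrightarrow> (c :: real) \<cdot>\<^sub>v x \<in> orth_compl n Y"
  unfolding orth_compl_def by (auto simp: smult_scalar_prod_distrib subset_iff)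

lemma symmetric_mat_scalar_prod:
  fixes Q :: "real mat"
  assumes "Q \<in> carrier_mat n n" "transpose_mat Q = Q" "x \<in> carrier_vec n" "z \<in> carrier_vec n"
  shows "(Q *\<^sub>v x) \<bullet> z = x \<bullet> (Q *\<^sub>v z)"
  using transpose_vec_mult_scalar[OF assms(1) assms(4) assms(3)] assms(2) by simp

lemma symmetric_mat_mult_vec_orth_compl_kernel:
  fixes Q :: "real mat"
  assumes Q: "Q \<in> carrier_mat n n" "transpose_mat Q = Q" and x: "x \<in> carrier_vec n"
  shows "Q *\<^sub>v x \<in> orth_compl n (mat_kernel Q)"
  using Q x symmetric_mat_scalar_prod[OF Q x] by (auto simp: orth_compl_def mat_kernel_def)

lemma mcomplete_orth_compl:
  assumes Y: "Y \<subseteq> carrier_vec n"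
  shows "Metric_space.mcomplete (orth_compl n Y) (dist_vec n)"
proof -
  interpret W: Metric_space "orth_compl n Y" "dist_vec n"
    using Metric_space.subspace[OF Metric_space_dist_vec] orth_compl_carrier by blast
  show ?thesis unfolding W.mcomplete_def
  proof (intro allI impI)
    fix x assume "W.MCauchy x"
    then have xW: "\<And>k. x k \<in> orth_compl n Y"
      and x_cauchy: "\<And>\<epsilon>. \<epsilon> > 0 \<Longrightarrow> \<exists>N. \<forall>k k'. N \<le> k \<longrightarrow> N \<le> k' \<longrightarrow> dist_vec n (x k) (x k') < \<epsilon>"
      unfolding W.MCauchy_def by auto
    have "Cauchy (\<lambda>k. x k $ i)" if i: "i < n" for i
    proof (rule metric_CauchyI)
      have coord: "dist (x k $ i) (x k' $ i) \<le> dist_vec n (x k) (x k')" for k k'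
        using member_le_L2_set[of "{..<n}" i "\<lambda>i. \<bar>x k $ i - x k' $ i\<bar>"] i
        by (simp add: dist_vec_def L2_set_def dist_real_def)
      fix \<epsilon> :: real assume "\<epsilon> > 0"
      then obtain N where "\<forall>k k'. N \<le> k \<longrightarrow> N \<le> k' \<longrightarrow> dist_vec n (x k) (x k') < \<epsilon>"
        using x_cauchy by blast
      then show "\<exists>N. \<forall>k\<ge>N. \<forall>k'\<ge>N. dist (x k $ i) (x k' $ i) < \<epsilon>"
        using coord order_le_less_trans by blast
    qed
    then obtain l where l: "l \<in> carrier_vec n" and lim: "\<And>i. i < n \<Longrightarrow> (\<lambda>k. x k $ i) \<longlonglongrightarrow> l $ i"
      by (intro that[of "vec n (\<lambda>i. lim (\<lambda>k. x k $ i))"]) (auto simp: Cauchy_convergent_iff convergent_LIMSEQ_iff)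
    have "(\<lambda>k. L2_set (\<lambda>i. x k $ i - l $ i) {..<n}) \<longlonglongrightarrow> L2_set (\<lambda>i. l $ i - l $ i) {..<n}"
      unfolding L2_set_def by (intro tendsto_intros lim) auto
    then have dist_lim: "(\<lambda>k. dist_vec n (x k) l) \<longlonglongrightarrow> 0"
      by (simp add: dist_vec_def L2_set_def)
    have "l \<bullet> y = 0" if y: "y \<in> Y" for y
    proof -
      have "dim_vec y = n" using y Y by auto
      then have "(\<lambda>k. x k \<bullet> y) \<longlonglongrightarrow> l \<bullet> y"
        unfolding scalar_prod_def by (intro tendsto_intros lim) auto
      moreover have "x k \<bullet> y = 0" for k
        using xW y unfolding orth_compl_def by blast
      ultimately show ?thesis
        by (simp add: LIMSEQ_const_iff)
    qed
    with l have "l \<in> orth_compl n Y" unfolding orth_compl_def by blast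
    moreover have "\<forall>\<^sub>F k in sequentially. x k \<in> orth_compl n Y \<and> dist_vec n (x k) l < \<epsilon>" if "\<epsilon> > 0" for \<epsilon>
      using order_tendstoD(2)[OF dist_lim that] xW by simp
    ultimately show "\<exists>l. limitin W.mtopology x l sequentially"
      unfolding W.limitin_metric by blast
  qed
qed

lemma (in Metric_space) contraction_fixpoint_geometric_rate:
  assumes "mcomplete" "M \<noteq> {}" "f \<in> M \<rightarrow> M" "0 \<le> k" "k < 1"
    and contraction: "\<And>x y. x \<in> M \<Longrightarrow> y \<in> M \<Longrightarrow> d (f x) (f y) \<le> k * d x y"
  obtains p where "p \<in> M" "f p = p" "\<And>q. q \<in> M \<Longrightarrow> f q = q \<Longrightarrow> q = p"
    "\<And>x j. x \<in> M \<Longrightarrow> d ((f ^^ j) x) p \<le> k ^ j * d x p"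
proof -
  obtain p where p: "p \<in> M" "f p = p"
    using Banach_fixedpoint_thm[OF assms(1-3,5) contraction] by blast
  have "d ((f ^^ j) x) p \<le> k ^ j * d x p" if x: "x \<in> M" for x j
  proof (induction j)
    case (Suc j)
    have "(f ^^ j) x \<in> M"
      using x \<open>f \<in> M \<rightarrow> M\<close> by (induction j) auto
    then have "d ((f ^^ Suc j) x) p \<le> k * d ((f ^^ j) x) p"
      using contraction[of "(f ^^ j) x" p] p by simp
    also have "\<dots> \<le> k * (k ^ j * d x p)"
      using Suc.IH \<open>0 \<le> k\<close> by (rule mult_left_mono)
    finally show ?case
      by simp
  qed simp
  then show thesis
    using that p contraction_imp_unique_fixpoint[OF _ p(2) assms(3,5) contraction _ p(1)] by blast
qed

lemma contraction_fixpoint_orth_compl: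
  assumes Y: "Y \<subseteq> carrier_vec n"
    and T_W: "\<And>x. x \<in> orth_compl n Y \<Longrightarrow> T x \<in> orth_compl n Y"
    and \<rho>: "0 \<le> \<rho>" "\<rho> < 1"
    and contraction: "\<And>a b. a \<in> orth_compl n Y \<Longrightarrow> b \<in> orth_compl n Y \<Longrightarrow> enorm (T a - T b) \<le> \<rho> * enorm (a - b)"
  shows "\<exists>p\<in>orth_compl n Y. T p = p \<and> (\<forall>q\<in>orth_compl n Y. T q = q \<longrightarrow> q = p) \<and>
    (\<forall>x\<in>orth_compl n Y. \<forall>j. enorm ((T ^^ j) x - p) \<le> \<rho> ^ j * enorm (x - p))"
proof -
  let ?W = "orth_compl n Y"
  interpret Metric_space ?W "dist_vec n"
    using Metric_space.subspace[OF Metric_space_dist_vec] orth_compl_carrier by blast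
  have dist: "dist_vec n a b = enorm (a - b)" if "a \<in> ?W" "b \<in> ?W" for a b
    using that orth_compl_carrier dist_vec_eq_enorm by blast
  have iterate: "(T ^^ j) x \<in> ?W" if "x \<in> ?W" for x j
    using that T_W by (induction j) auto
  have "?W \<noteq> {}" "T \<in> ?W \<rightarrow> ?W"
    using zero_in_orth_compl[OF Y] T_W by blast+
  moreover have "dist_vec n (T a) (T b) \<le> \<rho> * dist_vec n a b" if "a \<in> ?W" "b \<in> ?W" for a b
    using contraction[OF that] dist that T_W by simp
  ultimately obtain p where "p \<in> ?W" "T p = p" "\<And>q. q \<in> ?W \<Longrightarrow> T q = q \<Longrightarrow> q = p"
    "\<And>x j. x \<in> ?W \<Longrightarrow> dist_vec n ((T ^^ j) x) p \<le> \<rho> ^ j * dist_vec n x p"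
    using contraction_fixpoint_geometric_rate[OF mcomplete_orth_compl[OF Y]] \<rho> by blast
  then show ?thesis
    using iterate dist by metis
qed

text \<open>Compactness of the unit sphere of \<^term>\<open>orth_compl n Y\<close> is borrowed from the product
  topology on functions \<open>{..<n} \<rightarrow> real\<close>.\<close>

definition vec_coords :: "nat \<Rightarrow> real vec \<Rightarrow> nat \<Rightarrow> real" where
  "vec_coords n z = restrict (\<lambda>i. z $ i) {..<n}"

lemma scalar_prod_vec_coords: "y \<in> carrier_vec n \<Longrightarrow> x \<bullet> y = (\<Sum>i<n. vec_coords n x i * y $ i)"
  unfolding vec_coords_def scalar_prod_def by (simp add: atLeast0LessThan)

lemma vec_coords_unit_sphere_orth_compl:
  assumes Y: "Y \<subseteq> carrier_vec n"
  shows "vec_coords n ` {z \<in> orth_compl n Y. z \<bullet> z = 1} =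
    {f \<in> PiE {..<n} (\<lambda>_. {-1..1}). (\<Sum>i<n. f i * f i) = 1 \<and> (\<forall>y\<in>Y. (\<Sum>i<n. f i * y $ i) = 0)}"
    (is "_ = ?S")
proof (intro equalityI subsetI)
  have sq: "(\<Sum>i<n. vec_coords n z i * vec_coords n z i) = z \<bullet> z" if "z \<in> carrier_vec n" for z
    using scalar_prod_vec_coords[OF that, of z] by (auto simp: vec_coords_def intro!: sum.cong)
  have lin: "(\<Sum>i<n. vec_coords n z i * y $ i) = z \<bullet> y" if "y \<in> Y" for y z
    using scalar_prod_vec_coords[of y n z] that Y by auto
  fix f
  show "f \<in> ?S" if f: "f \<in> vec_coords n ` {z \<in> orth_compl n Y. z \<bullet> z = 1}"
  proof -
    obtain z where z: "z \<in> orth_compl n Y" "z \<bullet> z = 1" and f: "f = vec_coords n z"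
      using f by blast
    have zc: "z \<in> carrier_vec n"
      using z(1) by (rule orth_compl_carrier)
    have "\<bar>z $ i\<bar> \<le> 1" if "i < n" for i
      using abs_index_le_enorm[OF zc that] z(2) by (simp add: enorm_def)
    then show ?thesis
      using z sq[OF zc] lin unfolding f orth_compl_def by (auto simp: vec_coords_def abs_le_iff)
  qed
  show "f \<in> vec_coords n ` {z \<in> orth_compl n Y. z \<bullet> z = 1}" if f: "f \<in> ?S"
  proof -
    define z where "z = vec n f"
    have zc: "z \<in> carrier_vec n" and fz: "f = vec_coords n z"
      using f unfolding z_def vec_coords_def by (auto simp: PiE_def extensional_def)
    have "z \<bullet> z = 1" "\<forall>y\<in>Y. z \<bullet> y = 0"
      using f sq[OF zc] lin unfolding fz by auto
    then show ?thesis
      using zc fz unfolding orth_compl_def by blast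
  qed
qed

lemma compactin_unit_sphere_orth_compl:
  assumes Y: "Y \<subseteq> carrier_vec n"
  shows "compactin (powertop_real {..<n}) (vec_coords n ` {z \<in> orth_compl n Y. z \<bullet> z = 1})"
proof -
  define X where "X = powertop_real {..<n}"
  define C where "C = {f \<in> topspace X. (\<Sum>i<n. f i * f i) = 1 \<and> (\<forall>y\<in>Y. (\<Sum>i<n. f i * y $ i) = 0)}"
  have "closedin X {f \<in> topspace X. (\<Sum>i<n. f i * f i) \<in> {1}}"
    unfolding X_def by (intro closedin_continuous_map_preimage) (auto intro!: continuous_intros)
  moreover have "closedin X {f \<in> topspace X. (\<Sum>i<n. f i * y $ i) \<in> {0}}" for y
    unfolding X_def by (intro closedin_continuous_map_preimage) (auto intro!: continuous_intros)
  ultimately have "closedin X ({f \<in> topspace X. (\<Sum>i<n. f i * f i) \<in> {1}} \<inter>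
      (topspace X \<inter> (\<Inter>y\<in>Y. {f \<in> topspace X. (\<Sum>i<n. f i * y $ i) \<in> {0}})))"
    by (cases "Y = {}") (auto intro!: closedin_Int closedin_INT)
  also have "{f \<in> topspace X. (\<Sum>i<n. f i * f i) \<in> {1}} \<inter>
      (topspace X \<inter> (\<Inter>y\<in>Y. {f \<in> topspace X. (\<Sum>i<n. f i * y $ i) \<in> {0}})) = C"
    unfolding C_def by auto
  finally have "compactin X (C \<inter> PiE {..<n} (\<lambda>_. {-1..1}))"
    unfolding X_def by (simp add: closed_Int_compactin compactin_PiE)
  also have "C \<inter> PiE {..<n} (\<lambda>_. {-1..1}) = vec_coords n ` {z \<in> orth_compl n Y. z \<bullet> z = 1}"
    unfolding vec_coords_unit_sphere_orth_compl[OF Y] C_def X_def by (auto simp: PiE_def)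
  finally show ?thesis
    unfolding X_def .
qed

lemma exists_max_norm_on_unit_sphere:
  fixes Q :: "real mat"
  assumes Q: "Q \<in> carrier_mat n n" and Y: "Y \<subseteq> carrier_vec n"
    and x0: "x0 \<in> orth_compl n Y" "x0 \<bullet> x0 = 1"
  obtains x where "x \<in> orth_compl n Y" "x \<bullet> x = 1"
    "\<And>z. z \<in> orth_compl n Y \<Longrightarrow> z \<bullet> z = 1 \<Longrightarrow> (Q *\<^sub>v z) \<bullet> (Q *\<^sub>v z) \<le> (Q *\<^sub>v x) \<bullet> (Q *\<^sub>v x)"
proof -
  define U where "U = {z \<in> orth_compl n Y. z \<bullet> z = 1}"
  define qf where "qf f = (\<Sum>i<n. (\<Sum>j<n. Q $$ (i,j) * f j) * (\<Sum>j<n. Q $$ (i,j) * f j))" for f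
  have "continuous_map (powertop_real {..<n}) euclideanreal qf"
    unfolding qf_def by (auto intro!: continuous_intros)
  then have "compactin euclideanreal (qf ` vec_coords n ` U)"
    using image_compactin compactin_unit_sphere_orth_compl[OF Y] unfolding U_def by blast
  moreover have "qf ` vec_coords n ` U = (\<lambda>z. (Q *\<^sub>v z) \<bullet> (Q *\<^sub>v z)) ` U"
    unfolding image_image
  proof (rule image_cong[OF refl])
    fix z assume "z \<in> U"
    then show "qf (vec_coords n z) = (Q *\<^sub>v z) \<bullet> (Q *\<^sub>v z)"
      using Q orth_compl_carrier[of z n Y] unfolding qf_def U_def
      by (simp add: vec_coords_def scalar_prod_def atLeast0LessThan)
  qed
  ultimately have "compact ((\<lambda>z. (Q *\<^sub>v z) \<bullet> (Q *\<^sub>v z)) ` U)"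
    by simp
  moreover have "U \<noteq> {}"
    using x0 U_def by blast
  ultimately obtain x where "x \<in> U" "\<forall>z\<in>U. (Q *\<^sub>v z) \<bullet> (Q *\<^sub>v z) \<le> (Q *\<^sub>v x) \<bullet> (Q *\<^sub>v x)"
    using compact_attains_sup[of "(\<lambda>z. (Q *\<^sub>v z) \<bullet> (Q *\<^sub>v z)) ` U"] by auto
  then show thesis
    using that unfolding U_def by blast
qed

lemma scalar_prod_add_smult_self:
  fixes u v :: "real vec"
  assumes "u \<in> carrier_vec n" "v \<in> carrier_vec n"
  shows "(u + t \<cdot>\<^sub>v v) \<bullet> (u + t \<cdot>\<^sub>v v) = u \<bullet> u + 2 * t * (u \<bullet> v) + t\<^sup>2 * (v \<bullet> v)"
  using assms
  by (simp add: add_scalar_prod_distrib[of _ n] scalar_prod_add_distrib[of _ n] comm_scalar_prod[of v n u]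
      power2_eq_square algebra_simps)

lemma normalize_scalar_prod_self:
  assumes "x \<in> carrier_vec n" "x \<noteq> 0\<^sub>v n"
  shows "(inverse (enorm x) \<cdot>\<^sub>v x) \<bullet> (inverse (enorm x) \<cdot>\<^sub>v x) = 1"
proof -
  have "enorm x \<noteq> 0"
    using assms enorm_eq_0_iff by blast
  moreover have "x \<bullet> x = enorm x * enorm x"
    by (simp add: power2_eq_square flip: enorm_square)
  ultimately show ?thesis
    using assms(1) by (simp add: field_simps)
qed

lemma norm_bound_from_unit_sphere:
  fixes Q :: "real mat"
  assumes Q: "Q \<in> carrier_mat n n" and Y: "Y \<subseteq> carrier_vec n"
    and bound: "\<And>z. z \<in> orth_compl n Y \<Longrightarrow> z \<bullet> z = 1 \<Longrightarrow> (Q *\<^sub>v z) \<bullet> (Q *\<^sub>v z) \<le> \<nu>"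
    and z: "z \<in> orth_compl n Y"
  shows "(Q *\<^sub>v z) \<bullet> (Q *\<^sub>v z) \<le> \<nu> * (z \<bullet> z)"
proof (cases "z = 0\<^sub>v n")
  case True
  have "Q *\<^sub>v 0\<^sub>v n = 0\<^sub>v n"
    using Q by (intro eq_vecI) auto
  then show ?thesis using True by simp
next
  case False
  have zc: "z \<in> carrier_vec n"
    using z by (rule orth_compl_carrier)
  define c where "c = inverse (enorm z)"
  have "(Q *\<^sub>v (c \<cdot>\<^sub>v z)) \<bullet> (Q *\<^sub>v (c \<cdot>\<^sub>v z)) \<le> \<nu>"
    using bound orth_compl_smult[OF Y z] normalize_scalar_prod_self[OF zc False] unfolding c_def by blast
  then have "c * c * ((Q *\<^sub>v z) \<bullet> (Q *\<^sub>v z)) \<le> \<nu>"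
    using Q zc by (simp add: mult_mat_vec)
  moreover have "c * c * (z \<bullet> z) = 1"
    using normalize_scalar_prod_self[OF zc False] zc unfolding c_def by simp
  ultimately show ?thesis
    by (metis dot_self_nonneg mult.commute mult_right_mono mult.assoc mult_1_left)
qed

lemma quadratic_nonpos_imp_linear_coeff_zero:
  assumes "\<And>t :: real. t * p + t\<^sup>2 * q \<le> 0"
  shows "p = 0"
proof -
  define d where "d = \<bar>q\<bar> + 1"
  have d: "d > 0" "d + q \<ge> 1"
    unfolding d_def by linarith+
  then have "(p / d) * p + (p / d)\<^sup>2 * q = p\<^sup>2 * (d + q) / d\<^sup>2"
    by (simp add: field_simps power2_eq_square)
  then have "p\<^sup>2 * (d + q) \<le> 0"
    using assms[of "p / d"] d by (simp add: divide_le_0_iff)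
  moreover have "p\<^sup>2 \<le> p\<^sup>2 * (d + q)"
    using mult_left_mono[OF d(2), of "p\<^sup>2"] by simp
  ultimately have "p\<^sup>2 \<le> 0"
    by linarith
  then show ?thesis
    by simp
qed

lemma max_norm_unit_vector_eigen_square:
  fixes Q :: "real mat"
  assumes Q: "Q \<in> carrier_mat n n" "transpose_mat Q = Q" and Y: "Y \<subseteq> carrier_vec n"
    and invariant: "\<And>z. z \<in> orth_compl n Y \<Longrightarrow> Q *\<^sub>v z \<in> orth_compl n Y"
    and x: "x \<in> orth_compl n Y" "x \<bullet> x = 1"
    and max: "\<And>z. z \<in> orth_compl n Y \<Longrightarrow> z \<bullet> z = 1 \<Longrightarrow> (Q *\<^sub>v z) \<bullet> (Q *\<^sub>v z) \<le> (Q *\<^sub>v x) \<bullet> (Q *\<^sub>v x)"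
  shows "Q *\<^sub>v (Q *\<^sub>v x) = ((Q *\<^sub>v x) \<bullet> (Q *\<^sub>v x)) \<cdot>\<^sub>v x"
proof -
  define \<nu> where "\<nu> = (Q *\<^sub>v x) \<bullet> (Q *\<^sub>v x)"
  define a where "a = Q *\<^sub>v x"
  have xc: "x \<in> carrier_vec n" and ac: "a \<in> carrier_vec n" and aW: "a \<in> orth_compl n Y"
    using x orth_compl_carrier Q invariant unfolding a_def by auto
  have first_order: "a \<bullet> (Q *\<^sub>v y) = \<nu> * (x \<bullet> y)" if y: "y \<in> orth_compl n Y" for y
  proof -
    \<comment> \<open>\<open>t \<mapsto> \<nu> |x + t y|\<^sup>2 - |Q (x + t y)|\<^sup>2\<close> is nonnegative and vanishes at \<open>t = 0\<close>\<close>
    define b where "b = Q *\<^sub>v y"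
    have yc: "y \<in> carrier_vec n" and bc: "b \<in> carrier_vec n"
      using y orth_compl_carrier Q unfolding b_def by auto
    have "t * (2 * (a \<bullet> b - \<nu> * (x \<bullet> y))) + t\<^sup>2 * (b \<bullet> b - \<nu> * (y \<bullet> y)) \<le> 0" for t
    proof -
      have "Q *\<^sub>v (x + t \<cdot>\<^sub>v y) = a + t \<cdot>\<^sub>v b"
        unfolding a_def b_def using Q xc yc by (simp add: mult_add_distrib_mat_vec mult_mat_vec)
      then have "(a + t \<cdot>\<^sub>v b) \<bullet> (a + t \<cdot>\<^sub>v b) \<le> \<nu> * ((x + t \<cdot>\<^sub>v y) \<bullet> (x + t \<cdot>\<^sub>v y))"
        using norm_bound_from_unit_sphere[OF Q(1) Y, of \<nu>] max orth_compl_add[OF Y x(1) orth_compl_smult[OF Y y]]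
        unfolding \<nu>_def by metis
      then show ?thesis
        using x(2) unfolding scalar_prod_add_smult_self[OF ac bc] scalar_prod_add_smult_self[OF xc yc]
        by (simp add: \<nu>_def a_def algebra_simps)
    qed
    then show ?thesis
      using quadratic_nonpos_imp_linear_coeff_zero unfolding b_def by fastforce
  qed
  define r where "r = Q *\<^sub>v a - \<nu> \<cdot>\<^sub>v x"
  have rW: "r \<in> orth_compl n Y"
    unfolding r_def using orth_compl_diff[OF Y invariant[OF aW] orth_compl_smult[OF Y x(1)]] .
  then have rc: "r \<in> carrier_vec n"
    by (rule orth_compl_carrier)
  have "r \<bullet> r = (Q *\<^sub>v a) \<bullet> r - (\<nu> \<cdot>\<^sub>v x) \<bullet> r"
    using minus_scalar_prod_distrib[of "Q *\<^sub>v a" n "\<nu> \<cdot>\<^sub>v x" r] Q ac xc rc by (simp flip: r_def)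
  also have "\<dots> = a \<bullet> (Q *\<^sub>v r) - \<nu> * (x \<bullet> r)"
    using symmetric_mat_scalar_prod[OF Q ac rc] xc rc by simp
  also have "\<dots> = 0"
    using first_order[OF rW] by simp
  finally have "r = 0\<^sub>v n"
    using dot_self_eq_0_iff[OF rc] by simp
  have "Q *\<^sub>v a = \<nu> \<cdot>\<^sub>v x"
  proof (rule eq_vecI)
    fix i assume "i < dim_vec (\<nu> \<cdot>\<^sub>v x)"
    then show "(Q *\<^sub>v a) $ i = (\<nu> \<cdot>\<^sub>v x) $ i"
      using arg_cong[OF \<open>r = 0\<^sub>v n\<close>, of "\<lambda>v. v $ i"] Q ac xc by (simp add: r_def)
  qed (use Q xc in simp)
  then show ?thesis
    unfolding a_def \<nu>_def .
qed

text \<open>Since \<open>(Q - s) (Q + s) x = 0\<close>, either \<open>Q x + s x\<close> is an eigenvector for \<open>s\<close>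
  or \<open>x\<close> is one for \<open>-s\<close>.\<close>

lemma eigenvector_from_square_eigenvector:
  fixes Q :: "real mat"
  assumes Q: "Q \<in> carrier_mat n n" and Y: "Y \<subseteq> carrier_vec n"
    and invariant: "\<And>z. z \<in> orth_compl n Y \<Longrightarrow> Q *\<^sub>v z \<in> orth_compl n Y"
    and x: "x \<in> orth_compl n Y" "x \<noteq> 0\<^sub>v n"
    and square: "Q *\<^sub>v (Q *\<^sub>v x) = (s * s) \<cdot>\<^sub>v x"
  obtains \<sigma> y where "\<bar>\<sigma>\<bar> = \<bar>s\<bar>" "y \<in> orth_compl n Y" "y \<noteq> 0\<^sub>v n" "Q *\<^sub>v y = \<sigma> \<cdot>\<^sub>v y"
proof (cases "Q *\<^sub>v x + s \<cdot>\<^sub>v x = 0\<^sub>v n")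
  case True
  have xc: "x \<in> carrier_vec n"
    using x(1) by (rule orth_compl_carrier)
  have "Q *\<^sub>v x = (- s) \<cdot>\<^sub>v x"
  proof (rule eq_vecI)
    fix i assume "i < dim_vec ((- s) \<cdot>\<^sub>v x)"
    then show "(Q *\<^sub>v x) $ i = ((- s) \<cdot>\<^sub>v x) $ i"
      using arg_cong[OF True, of "\<lambda>v. v $ i"] Q xc by simp
  qed (use Q xc in simp)
  then show thesis
    using that[of "- s" x] x by simp
next
  case False
  define w where "w = Q *\<^sub>v x + s \<cdot>\<^sub>v x"
  have xc: "x \<in> carrier_vec n"
    using x(1) by (rule orth_compl_carrier)
  have "w \<in> orth_compl n Y"
    unfolding w_def using orth_compl_add[OF Y invariant[OF x(1)] orth_compl_smult[OF Y x(1)]] .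
  moreover have "Q *\<^sub>v w = s \<cdot>\<^sub>v w"
  proof -
    have "Q *\<^sub>v w = Q *\<^sub>v (Q *\<^sub>v x) + s \<cdot>\<^sub>v (Q *\<^sub>v x)"
      unfolding w_def using Q xc by (simp add: mult_add_distrib_mat_vec mult_mat_vec)
    also have "\<dots> = s \<cdot>\<^sub>v w"
      unfolding square w_def using Q xc by (intro eq_vecI) (auto simp: algebra_simps)
    finally show ?thesis .
  qed
  ultimately show thesis
    using that False unfolding w_def by blast
qed

lemma symmetric_mat_norm_bound_eigenvalue:
  fixes Q :: "real mat"
  assumes Q: "Q \<in> carrier_mat n n" "transpose_mat Q = Q" and Y: "Y \<subseteq> carrier_vec n"
    and invariant: "\<And>z. z \<in> orth_compl n Y \<Longrightarrow> Q *\<^sub>v z \<in> orth_compl n Y"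
    and x0: "x0 \<in> orth_compl n Y" "x0 \<noteq> 0\<^sub>v n"
  obtains \<sigma> y where "y \<in> orth_compl n Y" "y \<noteq> 0\<^sub>v n" "Q *\<^sub>v y = \<sigma> \<cdot>\<^sub>v y"
    "\<And>z. z \<in> orth_compl n Y \<Longrightarrow> enorm (Q *\<^sub>v z) \<le> \<bar>\<sigma>\<bar> * enorm z"
proof -
  obtain x where x: "x \<in> orth_compl n Y" "x \<bullet> x = 1" and max:
    "\<And>z. z \<in> orth_compl n Y \<Longrightarrow> z \<bullet> z = 1 \<Longrightarrow> (Q *\<^sub>v z) \<bullet> (Q *\<^sub>v z) \<le> (Q *\<^sub>v x) \<bullet> (Q *\<^sub>v x)"
    using exists_max_norm_on_unit_sphere[OF Q(1) Y orth_compl_smult[OF Y x0(1)]]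
      normalize_scalar_prod_self[OF orth_compl_carrier[OF x0(1)] x0(2)] by blast
  define s where "s = sqrt ((Q *\<^sub>v x) \<bullet> (Q *\<^sub>v x))"
  have s: "s * s = (Q *\<^sub>v x) \<bullet> (Q *\<^sub>v x)" "s \<ge> 0"
    unfolding s_def by (simp_all add: dot_self_nonneg)
  have "x \<noteq> 0\<^sub>v n"
    using x(2) by auto
  then obtain \<sigma> y where \<sigma>: "\<bar>\<sigma>\<bar> = s" and y: "y \<in> orth_compl n Y" "y \<noteq> 0\<^sub>v n" "Q *\<^sub>v y = \<sigma> \<cdot>\<^sub>v y"
    using eigenvector_from_square_eigenvector[OF Q(1) Y invariant x(1)]
      max_norm_unit_vector_eigen_square[OF Q Y invariant x max] s by (metis abs_of_nonneg)
  have "enorm (Q *\<^sub>v z) \<le> \<bar>\<sigma>\<bar> * enorm z" if "z \<in> orth_compl n Y" for z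
  proof -
    have "(Q *\<^sub>v z) \<bullet> (Q *\<^sub>v z) \<le> \<bar>\<sigma>\<bar>\<^sup>2 * (z \<bullet> z)"
      using norm_bound_from_unit_sphere[OF Q(1) Y max that] s \<sigma> by (simp add: power2_eq_square)
    then have "sqrt ((Q *\<^sub>v z) \<bullet> (Q *\<^sub>v z)) \<le> \<bar>\<sigma>\<bar> * sqrt (z \<bullet> z)"
      by (metis abs_ge_zero real_sqrt_le_mono real_sqrt_mult real_sqrt_pow2 abs_idempotent real_sqrt_abs)
    then show ?thesis
      unfolding enorm_def .
  qed
  then show thesis
    using that y by blast
qed

lemma eigenvalue_psd_nonneg:
  fixes M :: "real mat"
  assumes M: "M \<in> carrier_mat n n" and psd: "\<forall>x\<in>carrier_vec n. 0 \<le> x \<bullet> (M *\<^sub>v x)"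
    and "eigenvalue M l"
  shows "0 \<le> l"
proof -
  obtain v where v: "v \<in> carrier_vec n" "v \<noteq> 0\<^sub>v n" "M *\<^sub>v v = l \<cdot>\<^sub>v v"
    using assms(3) M unfolding eigenvalue_def eigenvector_def by auto
  have "0 \<le> v \<bullet> (M *\<^sub>v v)"
    using psd v(1) by blast
  also have "\<dots> = l * (v \<bullet> v)"
    using v by simp
  finally show ?thesis
    using v dot_self_nonneg[of v] dot_self_eq_0_iff[OF v(1)] by (simp add: zero_le_mult_iff)
qed

lemma eigenvector_orth_compl_kernel_nonzero_eigenvalue:
  fixes M :: "real mat"
  assumes M: "M \<in> carrier_mat n n" and y: "y \<in> orth_compl n (mat_kernel M)" "y \<noteq> 0\<^sub>v n"
    and eigen: "M *\<^sub>v y = l \<cdot>\<^sub>v y"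
  shows "eigenvalue M l" "l \<noteq> 0"
proof -
  have yc: "y \<in> carrier_vec n"
    using y(1) by (rule orth_compl_carrier)
  then show "eigenvalue M l"
    using M y(2) eigen unfolding eigenvalue_def eigenvector_def by auto
  show "l \<noteq> 0"
  proof
    assume "l = 0"
    then have "y \<in> mat_kernel M"
      using eigen M yc unfolding mat_kernel_def by auto
    then have "y \<bullet> y = 0"
      using y(1) unfolding orth_compl_def by blast
    then show False
      using dot_self_eq_0_iff[OF yc] y(2) by blast
  qed
qed

lemma step_size_contraction_factor:
  fixes lmin lmax l \<tau> \<rho> :: real
  assumes "0 < lmin" "lmin \<le> l" "l \<le> lmax" "0 < \<tau>"
    and "(1 - \<rho>) / lmin \<le> \<tau>" "\<tau> \<le> (1 + \<rho>) / lmax"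
  shows "\<bar>1 - \<tau> * l\<bar> \<le> \<rho>"
proof -
  have "1 - \<rho> \<le> \<tau> * lmin"
    using assms by (simp add: divide_le_eq mult.commute)
  moreover have "\<tau> * lmax \<le> 1 + \<rho>"
    using assms by (simp add: le_divide_eq mult.commute)
  moreover have "\<tau> * lmin \<le> \<tau> * l" "\<tau> * l \<le> \<tau> * lmax"
    using assms by simp_all
  ultimately show ?thesis
    by linarith
qed

lemma psd_nonzero_eigenvalue_bounds:
  fixes M :: "real mat"
  defines "\<Lambda> \<equiv> {l. eigenvalue M l \<and> l \<noteq> 0}"
  assumes M: "M \<in> carrier_mat n n" and psd: "\<forall>x\<in>carrier_vec n. 0 \<le> x \<bullet> (M *\<^sub>v x)"
    and l: "l \<in> \<Lambda>"
  shows "0 < Min \<Lambda>" "Min \<Lambda> \<le> l" "l \<le> Max \<Lambda>"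
proof -
  have "\<Lambda> \<subseteq> spectrum M"
    unfolding \<Lambda>_def spectrum_def by auto
  then have "finite \<Lambda>"
    using card_finite_spectrum(1)[OF M] finite_subset by blast
  moreover have "0 < l'" if "l' \<in> \<Lambda>" for l'
    using eigenvalue_psd_nonneg[OF M psd] that unfolding \<Lambda>_def by force
  moreover have "Min \<Lambda> \<in> \<Lambda>"
    using \<open>finite \<Lambda>\<close> l by (intro Min_in) auto
  ultimately show "0 < Min \<Lambda>" "Min \<Lambda> \<le> l" "l \<le> Max \<Lambda>"
    using l by auto
qed

lemma exists_nonzero_orth_compl_kernel:
  fixes M :: "real mat"
  assumes M: "M \<in> carrier_mat n n" "transpose_mat M = M" and nonzero: "M \<noteq> 0\<^sub>m n n"
  obtains x where "x \<in> orth_compl n (mat_kernel M)" "x \<noteq> 0\<^sub>v n"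
proof -
  obtain i j where ij: "i < n" "j < n" "M $$ (i, j) \<noteq> 0"
    using nonzero M by (metis eq_matI carrier_matD index_zero_mat(1) index_zero_mat(2) index_zero_mat(3))
  have "(M *\<^sub>v unit_vec n j) $ i \<noteq> 0"
    using ij M by simp
  then show thesis
    using that symmetric_mat_mult_vec_orth_compl_kernel[OF M, of "unit_vec n j"] ij by fastforce
qed

lemma mult_vec_one_minus_smult_mat:
  fixes M :: "real mat"
  assumes M: "M \<in> carrier_mat n n" and z: "z \<in> carrier_vec n"
  shows "(1\<^sub>m n - \<tau> \<cdot>\<^sub>m M) *\<^sub>v z = z - \<tau> \<cdot>\<^sub>v (M *\<^sub>v z)"
proof -
  have "(\<tau> \<cdot>\<^sub>m M) *\<^sub>v z = \<tau> \<cdot>\<^sub>v (M *\<^sub>v z)"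
    using M z by (intro eq_vecI) (auto simp: scalar_prod_def sum_distrib_left algebra_simps)
  then show ?thesis
    using minus_mult_distrib_mat_vec[of "1\<^sub>m n" n n "\<tau> \<cdot>\<^sub>m M" z] M z by simp
qed

lemma transpose_one_minus_smult_mat:
  fixes M :: "real mat"
  assumes "M \<in> carrier_mat n n" "transpose_mat M = M"
  shows "transpose_mat (1\<^sub>m n - \<tau> \<cdot>\<^sub>m M) = 1\<^sub>m n - \<tau> \<cdot>\<^sub>m M"
proof -
  have "transpose_mat (\<tau> \<cdot>\<^sub>m M) = \<tau> \<cdot>\<^sub>m transpose_mat M"
    by (intro eq_matI) auto
  then show ?thesis
    using assms transpose_minus[of "1\<^sub>m n" n n "\<tau> \<cdot>\<^sub>m M"] by auto
qed

lemma eigenvector_one_minus_smult_mat: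
  fixes M :: "real mat"
  assumes M: "M \<in> carrier_mat n n" and y: "y \<in> carrier_vec n" and "\<tau> \<noteq> 0"
    and eigen: "(1\<^sub>m n - \<tau> \<cdot>\<^sub>m M) *\<^sub>v y = \<sigma> \<cdot>\<^sub>v y"
  shows "M *\<^sub>v y = ((1 - \<sigma>) / \<tau>) \<cdot>\<^sub>v y"
proof (rule eq_vecI)
  fix i assume "i < dim_vec (((1 - \<sigma>) / \<tau>) \<cdot>\<^sub>v y)"
  then have "i < n" and "y $ i - \<tau> * (M *\<^sub>v y) $ i = \<sigma> * y $ i"
    using arg_cong[OF eigen, of "\<lambda>v. v $ i"] mult_vec_one_minus_smult_mat[OF M y] M y by auto
  then show "(M *\<^sub>v y) $ i = (((1 - \<sigma>) / \<tau>) \<cdot>\<^sub>v y) $ i"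
    using \<open>\<tau> \<noteq> 0\<close> y by (simp add: field_simps)
qed (use M y in simp)

lemma gradient_step_contraction:
  fixes M :: "real mat" and \<tau> \<rho> :: real
  defines "lmin \<equiv> Min {l. eigenvalue M l \<and> l \<noteq> 0}" and "lmax \<equiv> Max {l. eigenvalue M l \<and> l \<noteq> 0}"
  assumes M: "M \<in> carrier_mat n n" "transpose_mat M = M"
    and psd: "\<forall>x\<in>carrier_vec n. 0 \<le> x \<bullet> (M *\<^sub>v x)" and nonzero: "M \<noteq> 0\<^sub>m n n"
    and \<tau>: "0 < \<tau>" "(1 - \<rho>) / lmin \<le> \<tau>" "\<tau> \<le> (1 + \<rho>) / lmax"
  shows "0 \<le> \<rho>"
    and "\<And>z. z \<in> orth_compl n (mat_kernel M) \<Longrightarrow> enorm (z - \<tau> \<cdot>\<^sub>v (M *\<^sub>v z)) \<le> \<rho> * enorm z"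
proof -
  let ?W = "orth_compl n (mat_kernel M)" and ?C = "1\<^sub>m n - \<tau> \<cdot>\<^sub>m M"
  have ker: "mat_kernel M \<subseteq> carrier_vec n"
    using M unfolding mat_kernel_def by auto
  have C: "?C \<in> carrier_mat n n" "transpose_mat ?C = ?C"
    using M(1) transpose_one_minus_smult_mat[OF M] by auto
  have Cv: "?C *\<^sub>v z = z - \<tau> \<cdot>\<^sub>v (M *\<^sub>v z)" if "z \<in> ?W" for z
    using mult_vec_one_minus_smult_mat[OF M(1) orth_compl_carrier[OF that]] .
  have invariant: "?C *\<^sub>v z \<in> ?W" if z: "z \<in> ?W" for z
  proof -
    have "M *\<^sub>v z \<in> ?W"
      using symmetric_mat_mult_vec_orth_compl_kernel[OF M orth_compl_carrier[OF z]] .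
    then show ?thesis
      unfolding Cv[OF z] using orth_compl_diff[OF ker z orth_compl_smult[OF ker]] by blast
  qed
  obtain x0 where x0: "x0 \<in> ?W" "x0 \<noteq> 0\<^sub>v n"
    using exists_nonzero_orth_compl_kernel[OF M nonzero] by blast
  obtain \<sigma> y where y: "y \<in> ?W" "y \<noteq> 0\<^sub>v n" "?C *\<^sub>v y = \<sigma> \<cdot>\<^sub>v y"
    and bound: "\<And>z. z \<in> ?W \<Longrightarrow> enorm (?C *\<^sub>v z) \<le> \<bar>\<sigma>\<bar> * enorm z"
    using symmetric_mat_norm_bound_eigenvalue[OF C ker invariant x0] by blast
  define l where "l = (1 - \<sigma>) / \<tau>"
  have "M *\<^sub>v y = l \<cdot>\<^sub>v y"
    unfolding l_def using eigenvector_one_minus_smult_mat[OF M(1) orth_compl_carrier[OF y(1)] _ y(3)] \<tau>(1)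
    by simp
  then have "eigenvalue M l" "l \<noteq> 0"
    using eigenvector_orth_compl_kernel_nonzero_eigenvalue[OF M(1) y(1,2)] by blast+
  then have "\<bar>1 - \<tau> * l\<bar> \<le> \<rho>"
    using step_size_contraction_factor[OF _ _ _ \<tau>] psd_nonzero_eigenvalue_bounds[OF M(1) psd]
    unfolding lmin_def lmax_def by blast
  moreover have "\<sigma> = 1 - \<tau> * l"
    unfolding l_def using \<tau>(1) by simp
  ultimately have \<sigma>: "\<bar>\<sigma>\<bar> \<le> \<rho>"
    by simp
  then show "0 \<le> \<rho>"
    by linarith
  show "enorm (z - \<tau> \<cdot>\<^sub>v (M *\<^sub>v z)) \<le> \<rho> * enorm z" if "z \<in> ?W" for z
    using bound[OF that] mult_right_mono[OF \<sigma> enorm_nonneg[of z]] unfolding Cv[OF that] by linarith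
qed

lemma gradient_step_diff:
  fixes B A :: "real mat"
  assumes B: "B \<in> carrier_mat n m" and A: "A \<in> carrier_mat m n" and g: "g \<in> carrier_vec m"
    and a: "a \<in> carrier_vec n" and b: "b \<in> carrier_vec n"
  shows "(a + \<tau> \<cdot>\<^sub>v (B *\<^sub>v (g - A *\<^sub>v a))) - (b + \<tau> \<cdot>\<^sub>v (B *\<^sub>v (g - A *\<^sub>v b)))
    = (a - b) - \<tau> \<cdot>\<^sub>v ((B * A) *\<^sub>v (a - b))"
proof -
  have step: "B *\<^sub>v (g - A *\<^sub>v x) = B *\<^sub>v g - (B * A) *\<^sub>v x" if "x \<in> carrier_vec n" for x
    using B A g that by (simp add: mult_minus_distrib_mat_vec assoc_mult_mat_vec)
  have "(B * A) *\<^sub>v (a - b) = (B * A) *\<^sub>v a - (B * A) *\<^sub>v b"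
    using B A a b by (simp add: mult_minus_distrib_mat_vec)
  moreover have "B *\<^sub>v g \<in> carrier_vec n" "(B * A) *\<^sub>v a \<in> carrier_vec n" "(B * A) *\<^sub>v b \<in> carrier_vec n"
    using B A g a b by auto
  ultimately show ?thesis
    unfolding step[OF a] step[OF b] using a b B by (intro eq_vecI) (simp_all add: right_diff_distrib)
qed

lemma denoised_gradient_step_contraction:
  fixes B A :: "real mat" and D :: "real vec \<Rightarrow> real vec" and g :: "real vec" and n m :: nat
    and \<tau> \<rho> :: real
  defines "W \<equiv> orth_compl n (mat_kernel (B * A))"
    and "T \<equiv> \<lambda>\<kappa>. D (\<kappa> + \<tau> \<cdot>\<^sub>v (B *\<^sub>v (g - A *\<^sub>v \<kappa>)))"
  assumes B: "B \<in> carrier_mat n m" and A: "A \<in> carrier_mat m n" and g: "g \<in> carrier_vec m"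
    and range_B: "\<forall>y\<in>carrier_vec m. B *\<^sub>v y \<in> W"
    and D_W: "\<forall>x\<in>W. D x \<in> W"
    and D_nonexpansive: "\<exists>\<beta>\<le>1. \<forall>x\<in>W. \<forall>y\<in>W. enorm (D x - D y) \<le> \<beta> * enorm (x - y)"
    and step: "\<And>z. z \<in> W \<Longrightarrow> enorm (z - \<tau> \<cdot>\<^sub>v ((B * A) *\<^sub>v z)) \<le> \<rho> * enorm z"
  shows "\<And>\<kappa>. \<kappa> \<in> W \<Longrightarrow> T \<kappa> \<in> W"
    and "\<And>a b. a \<in> W \<Longrightarrow> b \<in> W \<Longrightarrow> enorm (T a - T b) \<le> \<rho> * enorm (a - b)"
proof -
  have ker: "mat_kernel (B * A) \<subseteq> carrier_vec n"
    using B A unfolding mat_kernel_def by auto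
  have carrier: "\<kappa> \<in> carrier_vec n" if "\<kappa> \<in> W" for \<kappa>
    using that orth_compl_carrier unfolding W_def by blast
  have forward_W: "\<kappa> + \<tau> \<cdot>\<^sub>v (B *\<^sub>v (g - A *\<^sub>v \<kappa>)) \<in> W" if \<kappa>: "\<kappa> \<in> W" for \<kappa>
  proof -
    have "B *\<^sub>v (g - A *\<^sub>v \<kappa>) \<in> W"
      using range_B g A carrier[OF \<kappa>] by auto
    then show ?thesis
      using orth_compl_add[OF ker \<kappa>[unfolded W_def] orth_compl_smult[OF ker]] unfolding W_def by blast
  qed
  then show "\<And>\<kappa>. \<kappa> \<in> W \<Longrightarrow> T \<kappa> \<in> W"
    using D_W unfolding T_def by blast
  obtain \<beta> where \<beta>: "\<beta> \<le> 1" "\<And>x y. x \<in> W \<Longrightarrow> y \<in> W \<Longrightarrow> enorm (D x - D y) \<le> \<beta> * enorm (x - y)"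
    using D_nonexpansive by blast
  fix a b assume ab: "a \<in> W" "b \<in> W"
  have "enorm (T a - T b)
      \<le> \<beta> * enorm ((a + \<tau> \<cdot>\<^sub>v (B *\<^sub>v (g - A *\<^sub>v a))) - (b + \<tau> \<cdot>\<^sub>v (B *\<^sub>v (g - A *\<^sub>v b))))"
    using \<beta>(2) forward_W ab unfolding T_def by blast
  also have "\<dots> \<le> enorm ((a - b) - \<tau> \<cdot>\<^sub>v ((B * A) *\<^sub>v (a - b)))"
    using mult_right_mono[OF \<beta>(1) enorm_nonneg] gradient_step_diff[OF B A g carrier carrier] ab by simp
  also have "\<dots> \<le> \<rho> * enorm (a - b)"
    using step orth_compl_diff[OF ker] ab unfolding W_def by blast
  finally show "enorm (T a - T b) \<le> \<rho> * enorm (a - b)" .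
qed

theorem proposition1:
  fixes K :: nat and B :: "real mat" and \<gamma> :: "real vec" and \<tau> \<rho> :: real
    and D :: "real vec \<Rightarrow> real vec"
  defines "At \<equiv> lifted_shear_op K"
  defines "V \<equiv> orth_compl (K*K) (mat_kernel (B * At))"
  defines "Fwd \<equiv> (\<lambda>\<kappa>. \<kappa> + \<tau> \<cdot>\<^sub>v (B *\<^sub>v (\<gamma> - At *\<^sub>v \<kappa>)))"
  defines "T \<equiv> (\<lambda>\<kappa>. D (Fwd \<kappa>))"
  defines "lmin \<equiv> Min {l. eigenvalue (B * At) l \<and> l \<noteq> 0}"
  defines "lmax \<equiv> Max {l. eigenvalue (B * At) l \<and> l \<noteq> 0}"
  assumes K2: "K \<ge> 2"
    and Bdim: "B \<in> carrier_mat (K*K) (2*(K*K))"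
    and \<gamma>dim: "\<gamma> \<in> carrier_vec (2*(K*K))"
    and \<tau>pos: "\<tau> > 0"
    and D_V: "\<forall>x\<in>V. D x \<in> V"
    and D_nonexp: "\<exists>\<beta>\<le>1. \<forall>x\<in>V. \<forall>y\<in>V. enorm (D x - D y) \<le> \<beta> * enorm (x - y)"
    and BA_sym: "transpose_mat (B * At) = B * At"
    and BA_psd: "\<forall>x\<in>carrier_vec (K*K). x \<bullet> ((B * At) *\<^sub>v x) \<ge> 0"
    and BA_nz: "B * At \<noteq> 0\<^sub>m (K*K) (K*K)"
    and imB: "\<forall>y\<in>carrier_vec (2*(K*K)). B *\<^sub>v y \<in> V"
    and \<rho>_ge: "(lmax - lmin) / (lmax + lmin) \<le> \<rho>"
    and \<rho>_lt: "\<rho> < 1"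
    and \<tau>_lo: "(1 - \<rho>) / lmin \<le> \<tau>"
    and \<tau>_hi: "\<tau> \<le> (1 + \<rho>) / lmax"
  shows "\<exists>\<kappa>h\<in>V. T \<kappa>h = \<kappa>h \<and> (\<forall>\<kappa>'\<in>V. T \<kappa>' = \<kappa>' \<longrightarrow> \<kappa>' = \<kappa>h) \<and>
           (\<forall>\<kappa>0\<in>V. \<forall>k::nat. enorm ((T ^^ k) \<kappa>0 - \<kappa>h) \<le> \<rho> ^ k * enorm (\<kappa>0 - \<kappa>h))"
proof -
  define n where "n = K * K"
  have At: "At \<in> carrier_mat (2 * n) n" and B: "B \<in> carrier_mat n (2 * n)"
    unfolding At_def lifted_shear_op_def n_def using Bdim by auto
  then have ker: "mat_kernel (B * At) \<subseteq> carrier_vec n" and "B * At \<in> carrier_mat n n"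
    unfolding mat_kernel_def by auto
  note step = gradient_step_contraction[OF this(2) BA_sym BA_psd[folded n_def] BA_nz[folded n_def]
      \<tau>pos \<tau>_lo[unfolded lmin_def] \<tau>_hi[unfolded lmax_def]]
  note T = denoised_gradient_step_contraction[OF B At \<gamma>dim[folded n_def] imB[unfolded V_def, folded n_def]
      D_V[unfolded V_def, folded n_def] D_nonexp[unfolded V_def, folded n_def] step(2)]
  show ?thesis
    using contraction_fixpoint_orth_compl[OF ker T(1) step(1) \<rho>_lt T(2)]
    unfolding T_def Fwd_def V_def n_def .
qed

end
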